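(* Let $\zeta$ be the Riemann zeta function and let $\rho$ be a complex number with $0 < \Re(\rho) < 1$ and $\zeta(\rho) = 0$ (a non-trivial zero). Then $$2^{\rho} + \frac{1}{\rho - 1} + \frac{1}{2} = \rho \int_{1}^{\infty} \left\{ t + \tfrac{1}{2} \right\} t^{-\rho-1}\, dt.$$
   Context: For a real number $x$, $\{x\} = x - \lfloor x \rfloor$ denotes the fractional part of $x$. The function $\zeta$ is the analytic continuation of $\sum_{n\ge 1} n^{-s}$ to the half-plane $\Re(s)>0$ (minus $s=1$). *)

theory Defs
  imports "HOL-Complex_Analysis.Complex_Analysis"
begin

definition zeta_domain :: "complex set" where
  "zeta_domain = {s. 0 < Re s} - {1}"

text \<open>Outside the domain it is set to 0 by convention.\<close>
definition zeta :: "complex \<Rightarrow> complex" where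
  "zeta = (THE f. f holomorphic_on zeta_domain
              \<and> (\<forall>s. 1 < Re s \<longrightarrow> f s = (\<Sum>n. inverse (of_nat (Suc n) powr s)))
              \<and> (\<forall>s. s \<notin> zeta_domain \<longrightarrow> f s = 0))"

end

theory Submission
  imports Defs
begin

(* Cut [1, \<infinity>) at 3/2, 5/2, ...: on each piece the integrand is (t - a) t powr (-s-1), which has an
   explicit antiderivative, so the integral becomes a series of elementary holomorphic functions of s.
   Its terms are O(k powr (-Re s - 1)) locally uniformly, so it is holomorphic on Re s > 0, s \<noteq> 1.
   For Re s > 1 the series telescopes to 1/(s-1) + 1/2 + 2 powr s - (2 powr s - 1) * zeta s, since the
   leftover terms (k + 3/2) powr -s are 2 powr s times the odd terms n powr -s, n \<ge> 3, of zeta.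
   As 2 powr s \<noteq> 1, this solves for zeta s; analytic continuation extends the identity to
   the whole domain, and at a zero of zeta it is the claim. *)

lemma complex_powr_add_one:
  fixes z w :: complex
  assumes "z \<noteq> 0"
  shows "z powr (w + 1) = z * z powr w"
  using assms by (simp add: powr_add)

definition linear_powr_antideriv :: "complex \<Rightarrow> real \<Rightarrow> real \<Rightarrow> complex" where
  "linear_powr_antideriv s a t =
     of_real t powr (1 - s) / (1 - s) + of_real a / s * of_real t powr (- s)"

lemma has_integral_linear_times_powr:
  fixes s :: complex and a b c :: real
  assumes s: "s \<noteq> 0" "s \<noteq> 1" and c: "0 < c" "c \<le> b"
  shows "((\<lambda>t. (of_real t - of_real a) * of_real t powr (- s - 1)) has_integral
           linear_powr_antideriv s a b - linear_powr_antideriv s a c) {c..b}"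
  unfolding linear_powr_antideriv_def
proof (rule fundamental_theorem_of_calculus[OF c(2)])
  fix x assume "x \<in> {c..b}"
  then have x: "0 < x" using c by auto
  then have nonpos: "complex_of_real x \<notin> \<real>\<^sub>\<le>\<^sub>0" by (auto simp: nonpos_Reals_def)
  have "((\<lambda>z. z powr (1 - s) / (1 - s) + of_real a / s * z powr (- s)) has_field_derivative
      (1 - s) * of_real x powr (1 - s - 1) / (1 - s) + of_real a / s * (- s * of_real x powr (- s - 1)))
      (at (of_real x))"
    using x s by (intro derivative_eq_intros has_field_derivative_powr[OF nonpos]) auto
  also have "(1 - s) * of_real x powr (1 - s - 1) / (1 - s) + of_real a / s * (- s * of_real x powr (- s - 1))
      = (of_real x - of_real a) * complex_of_real x powr (- s - 1)"
    using s x complex_powr_add_one[of "of_real x" "- s - 1"] by (simp add: field_simps)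
  finally show "((\<lambda>t. of_real t powr (1 - s) / (1 - s) + of_real a / s * of_real t powr (- s))
      has_vector_derivative (of_real x - of_real a) * of_real x powr (- s - 1)) (at x within {c..b})"
    by (rule has_vector_derivative_real_field)
qed

lemma times_linear_powr_antideriv_diff:
  fixes s :: complex and a b c :: real
  assumes s: "s \<noteq> 0" "s \<noteq> 1" and "b \<noteq> 0" "c \<noteq> 0"
  shows "s * (linear_powr_antideriv s a b - linear_powr_antideriv s a c)
    = (of_real b powr (1 - s) - of_real c powr (1 - s)) / (1 - s)
      - of_real (b - a) * of_real b powr (- s) + of_real (c - a) * of_real c powr (- s)"
proof -
  have split: "complex_of_real x powr (1 - s) = of_real x * of_real x powr (- s)" if "x \<noteq> 0" for x
    using that complex_powr_add_one[of "of_real x" "- s"] by simp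
  have "s * (b' * B / (1 - s) + a' / s * B - (c' * C / (1 - s) + a' / s * C))
      = (b' * B - c' * C) / (1 - s) - (b' - a') * B + (c' - a') * C" for a' b' c' B C :: complex
  proof -
    have "inverse (1 - s) * (1 - s) = 1" "inverse s * s = 1" using s by auto
    then show ?thesis unfolding divide_inverse by algebra
  qed
  then show ?thesis
    unfolding linear_powr_antideriv_def split[OF \<open>b \<noteq> 0\<close>] split[OF \<open>c \<noteq> 0\<close>] by simp
qed

(* The jump points k + 1/2 of frac (t + 1/2), with the first one replaced by the lower limit 1. *)
definition frac_break :: "nat \<Rightarrow> real" where
  "frac_break k = (if k = 0 then 1 else real k + 1/2)"

definition frac_integrand :: "complex \<Rightarrow> real \<Rightarrow> complex" where
  "frac_integrand s t = of_real (frac (t + 1/2)) * of_real t powr (- s - 1)"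

definition frac_piece :: "complex \<Rightarrow> nat \<Rightarrow> complex" where
  "frac_piece s k = linear_powr_antideriv s (real k + 1/2) (frac_break (Suc k))
                  - linear_powr_antideriv s (real k + 1/2) (frac_break k)"

lemma frac_break_Suc: "frac_break (Suc k) = real k + 3/2"
  by (simp add: frac_break_def)

lemma frac_break_bounds: "1 \<le> frac_break k" "real k + 1/2 \<le> frac_break k" "frac_break k \<le> real k + 1"
  by (simp_all add: frac_break_def)

lemma frac_break_mono: "frac_break k \<le> frac_break (Suc k)"
  by (simp add: frac_break_def)

lemma frac_add_half:
  assumes "real k + 1/2 \<le> t" "t < real k + 3/2"
  shows "frac (t + 1/2) = t - (real k + 1/2)"
proof -
  have "\<lfloor>t + 1/2\<rfloor> = int k + 1" using assms by (subst floor_eq_iff) auto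
  then show ?thesis by (simp add: frac_def)
qed

lemma has_integral_frac_piece:
  assumes "s \<noteq> 0" "s \<noteq> 1"
  shows "(frac_integrand s has_integral frac_piece s k) {frac_break k..frac_break (Suc k)}"
proof -
  have "((\<lambda>t. (of_real t - of_real (real k + 1/2)) * of_real t powr (- s - 1))
      has_integral frac_piece s k) {frac_break k..frac_break (Suc k)}"
    unfolding frac_piece_def
    using assms frac_break_bounds(1)[of k] frac_break_mono[of k]
    by (intro has_integral_linear_times_powr) auto
  then show ?thesis
  proof (rule has_integral_spike_finite[where S = "{frac_break (Suc k)}", rotated 2])
    fix t assume "t \<in> {frac_break k..frac_break (Suc k)} - {frac_break (Suc k)}"
    then have "real k + 1/2 \<le> t" "t < real k + 3/2"
      using frac_break_bounds(2)[of k] frac_break_Suc[of k] by auto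
    then show "frac_integrand s t = (of_real t - of_real (real k + 1/2)) * of_real t powr (- s - 1)"
      unfolding frac_integrand_def by (simp add: frac_add_half)
  qed auto
qed

lemma has_integral_frac_partial:
  assumes "s \<noteq> 0" "s \<noteq> 1"
  shows "(frac_integrand s has_integral (\<Sum>k<N. frac_piece s k)) {1..frac_break N}"
proof (induction N)
  case 0
  show ?case using has_integral_refl(2)[of "frac_integrand s" 1] by (simp add: frac_break_def)
next
  case (Suc N)
  have "(frac_integrand s has_integral (\<Sum>k<N. frac_piece s k) + frac_piece s N) {1..frac_break (Suc N)}"
    using has_integral_combine[OF frac_break_bounds(1) frac_break_mono Suc has_integral_frac_piece[OF assms]] .
  then show ?case by simp
qed

lemma norm_frac_integrand_le:
  assumes "0 \<le> t"
  shows "norm (frac_integrand s t) \<le> t powr (- Re s - 1)"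
proof -
  have "norm (complex_of_real (frac (t + 1/2))) \<le> 1"
    using frac_lt_1[of "t + 1/2"] frac_ge_0[of "t + 1/2"] by simp
  moreover have "norm (complex_of_real t powr (- s - 1)) = t powr (- Re s - 1)"
    using assms by (subst norm_powr_real_powr) auto
  ultimately show ?thesis
    unfolding frac_integrand_def norm_mult by (metis mult_left_le_one_le norm_ge_zero powr_ge_zero)
qed

lemma frac_piece_sums_integral:
  assumes "0 < Re s" "s \<noteq> 1"
  shows "(\<lambda>k. frac_piece s k) sums integral {1..} (frac_integrand s)"
proof -
  have s0: "s \<noteq> 0" using assms by auto
  define f where "f N t = (if t \<in> {..frac_break N} then frac_integrand s t else 0)" for N t
  have f_integral: "(f N has_integral (\<Sum>k<N. frac_piece s k)) {1..}" for N
  proof -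
    have "{..frac_break N} \<inter> {1..} = {1..frac_break N}" by auto
    then show ?thesis
      unfolding f_def has_integral_restrict_Int using has_integral_frac_partial[OF s0 assms(2)] by simp
  qed
  have majorant: "(\<lambda>t. t powr (- Re s - 1)) integrable_on {1..}"
    using has_integral_powr_to_inf[of "- Re s - 1" 1] assms(1) by auto
  have f_bound: "norm (f N t) \<le> t powr (- Re s - 1)" if "t \<in> {1..}" for N t
    using norm_frac_integrand_le[of t s] that by (auto simp: f_def)
  have f_lim: "(\<lambda>N. f N t) \<longlonglongrightarrow> frac_integrand s t" for t
  proof (rule tendsto_eventually)
    show "eventually (\<lambda>N. f N t = frac_integrand s t) sequentially"
      using eventually_ge_at_top[of "nat \<lceil>t\<rceil>"]
    proof eventually_elim
      case (elim N)
      then have "t \<le> frac_break N" using frac_break_bounds(2)[of N] by linarith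
      then show ?case by (simp add: f_def)
    qed
  qed
  have "(\<lambda>N. integral {1..} (f N)) \<longlonglongrightarrow> integral {1..} (frac_integrand s)"
    using f_integral f_bound f_lim by (intro dominated_convergence(2)[OF _ majorant]) blast+
  moreover have "integral {1..} (f N) = (\<Sum>k<N. frac_piece s k)" for N
    using f_integral by blast
  ultimately show ?thesis by (simp add: sums_def)
qed

lemma norm_frac_piece_le:
  assumes "0 < d" "d \<le> Re s" "s \<noteq> 1"
  shows "norm (frac_piece s k) \<le> (real k + 1/2) powr (- d - 1)"
proof -
  have "norm (frac_piece s k)
      \<le> (real k + 1/2) powr (- d - 1) * Henstock_Kurzweil_Integration.content (cbox (frac_break k) (frac_break (Suc k)))"
  proof (rule has_integral_bound)
    show "(frac_integrand s has_integral frac_piece s k) (cbox (frac_break k) (frac_break (Suc k)))"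
      using has_integral_frac_piece[of s k] assms by fastforce
    fix t assume "t \<in> cbox (frac_break k) (frac_break (Suc k))"
    then have t: "1 \<le> t" "real k + 1/2 \<le> t" using frac_break_bounds[of k] by auto
    have "norm (frac_integrand s t) \<le> t powr (- Re s - 1)" using norm_frac_integrand_le[of t s] t by simp
    also have "\<dots> \<le> t powr (- d - 1)" using t assms by (intro powr_mono) auto
    also have "\<dots> \<le> (real k + 1/2) powr (- d - 1)" using t assms by (intro powr_mono2') auto
    finally show "norm (frac_integrand s t) \<le> (real k + 1/2) powr (- d - 1)" .
  qed simp
  also have "\<dots> \<le> (real k + 1/2) powr (- d - 1) * 1"
    using frac_break_bounds[of k] frac_break_Suc[of k] by (intro mult_left_mono) auto
  finally show ?thesis by simp
qed

lemma summable_shifted_real_powr: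
  assumes "1 < p" "0 \<le> c"
  shows "summable (\<lambda>k. (real k + c) powr - p)"
proof (rule summable_comparison_test_ev)
  show "summable (\<lambda>k. real k powr - p)" using assms by (subst summable_real_powr_iff) auto
  show "eventually (\<lambda>k. norm ((real k + c) powr - p) \<le> real k powr - p) sequentially"
    using eventually_gt_at_top[of "0::nat"]
    by eventually_elim (use assms in \<open>auto intro!: powr_mono2'\<close>)
qed

lemma open_zeta_domain: "open zeta_domain"
  unfolding zeta_domain_def by (intro open_Diff open_halfspace_Re_gt) auto

lemma connected_zeta_domain: "connected zeta_domain"
  unfolding zeta_domain_def
  by (intro connected_open_delete open_halfspace_Re_gt convex_connected convex_halfspace_Re_gt) auto

lemma zeta_domain_cball:
  assumes "x \<in> zeta_domain"
  obtains d where "0 < d" "cball x d \<subseteq> zeta_domain" "\<And>z. z \<in> cball x d \<Longrightarrow> Re x / 2 \<le> Re z"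
proof
  define d where "d = min (Re x / 2) (dist x 1 / 2)"
  have x: "0 < Re x" "x \<noteq> 1" using assms by (auto simp: zeta_domain_def)
  then show "0 < d" by (simp add: d_def)
  show Re_ge: "Re x / 2 \<le> Re z" if "z \<in> cball x d" for z
    using that abs_Re_le_cmod[of "x - z"] by (auto simp: d_def dist_norm)
  show "cball x d \<subseteq> zeta_domain"
  proof
    fix z assume z: "z \<in> cball x d"
    have "z \<noteq> 1" using z x by (auto simp: d_def)
    then show "z \<in> zeta_domain" using Re_ge[OF z] x by (auto simp: zeta_domain_def)
  qed
qed

lemma frac_piece_holomorphic: "(\<lambda>s. frac_piece s k) holomorphic_on zeta_domain"
  unfolding frac_piece_def linear_powr_antideriv_def zeta_domain_def
  by (intro holomorphic_intros) auto

lemma frac_piece_suminf_holomorphic: "(\<lambda>s. \<Sum>k. frac_piece s k) holomorphic_on zeta_domain"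
proof (rule holomorphic_uniform_sequence[OF open_zeta_domain])
  show "(\<lambda>s. \<Sum>k<n. frac_piece s k) holomorphic_on zeta_domain" for n
    by (intro holomorphic_on_sum frac_piece_holomorphic)
  fix x assume "x \<in> zeta_domain"
  obtain d where d: "0 < d" "cball x d \<subseteq> zeta_domain"
    and Re_ge: "\<And>z. z \<in> cball x d \<Longrightarrow> Re x / 2 \<le> Re z"
    using zeta_domain_cball[OF \<open>x \<in> zeta_domain\<close>] by blast
  have "0 < Re x" using \<open>x \<in> zeta_domain\<close> by (simp add: zeta_domain_def)
  have "norm (frac_piece z k) \<le> (real k + 1/2) powr (- (Re x / 2) - 1)" if "z \<in> cball x d" for k z
    using that d(2) Re_ge[OF that] \<open>0 < Re x\<close>
    by (intro norm_frac_piece_le) (auto simp: zeta_domain_def)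
  moreover have "summable (\<lambda>k. (real k + 1/2) powr (- (Re x / 2) - 1))"
    using summable_shifted_real_powr[of "Re x / 2 + 1" "1/2"] \<open>0 < Re x\<close> by simp
  ultimately have "uniform_limit (cball x d) (\<lambda>n s. \<Sum>k<n. frac_piece s k) (\<lambda>s. \<Sum>k. frac_piece s k) sequentially"
    by (rule Weierstrass_m_test)
  with d show "\<exists>d>0. cball x d \<subseteq> zeta_domain \<and>
      uniform_limit (cball x d) (\<lambda>n s. \<Sum>k<n. frac_piece s k) (\<lambda>s. \<Sum>k. frac_piece s k) sequentially"
    by blast
qed

lemma times_frac_piece:
  assumes "s \<noteq> 0" "s \<noteq> 1"
  shows "s * frac_piece s k
    = of_real (frac_break (Suc k)) powr (1 - s) / (1 - s) - of_real (frac_break k) powr (1 - s) / (1 - s)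
      - of_real (real k + 3/2) powr (- s) + (if k = 0 then 1/2 else 0)"
proof -
  have "0 < frac_break k" using frac_break_bounds(1)[of k] by simp
  then have "s * frac_piece s k
    = (of_real (frac_break (Suc k)) powr (1 - s) - of_real (frac_break k) powr (1 - s)) / (1 - s)
      - of_real (frac_break (Suc k) - (real k + 1/2)) * of_real (frac_break (Suc k)) powr (- s)
      + of_real (frac_break k - (real k + 1/2)) * of_real (frac_break k) powr (- s)"
    unfolding frac_piece_def using assms frac_break_mono[of k]
    by (intro times_linear_powr_antideriv_diff) auto
  also have "\<dots> = of_real (frac_break (Suc k)) powr (1 - s) / (1 - s) - of_real (frac_break k) powr (1 - s) / (1 - s)
      - of_real (real k + 3/2) powr (- s) + (if k = 0 then 1/2 else 0)"
    by (simp add: frac_break_def diff_divide_distrib add.commute)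
  finally show ?thesis .
qed

lemma summable_dirichlet_powr:
  assumes "1 < Re s"
  shows "summable (\<lambda>n. inverse (of_nat (Suc n) powr s) :: complex)"
proof (rule summable_norm_cancel)
  have "norm (inverse (of_nat (Suc n) powr s) :: complex) = real (Suc n) powr (- Re s)" for n
    by (simp add: norm_inverse norm_powr_real_powr powr_minus)
  moreover have "summable (\<lambda>n. real (Suc n) powr (- Re s))"
    using assms summable_Suc_iff[of "\<lambda>n. real n powr (- Re s)"] by (simp add: summable_real_powr_iff)
  ultimately show "summable (\<lambda>n. norm (inverse (of_nat (Suc n) powr s) :: complex))" by simp
qed

lemma complex_of_real_half_powr:
  assumes "0 \<le> x"
  shows "complex_of_real (x / 2) powr (- s) = 2 powr s * of_real x powr (- s)"
proof -
  have "complex_of_real (x / 2) powr (- s) = of_real x powr (- s) * (1/2) powr (- s)"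
    using assms powr_times_real[of x "1/2" "- s"] by simp
  moreover have "(1/2 :: complex) powr (- s) = 2 powr s"
  proof -
    have "(2::complex) powr s * (1/2) powr s = 1"
      using powr_times_real[of 2 "1/2" s] by simp
    then show ?thesis by (simp add: powr_minus field_simps)
  qed
  ultimately show ?thesis by simp
qed

(* (k + 3/2) powr -s = 2 powr s * (2k + 3) powr -s runs through the terms with odd n \<ge> 3 of
   2 powr s * (\<Sum>n. n powr -s). *)
lemma sums_shifted_powr_dirichlet:
  assumes "1 < Re s"
  defines "z \<equiv> (\<Sum>n. inverse (of_nat (Suc n) powr s) :: complex)"
  shows "(\<lambda>k. complex_of_real (real k + 3/2) powr (- s)) sums ((2 powr s - 1) * z - 2 powr s)"
proof -
  define A where "A n = complex_of_real ((real n + 1) / 2) powr (- s)" for n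
  have z: "(\<lambda>n. inverse (of_nat (Suc n) powr s) :: complex) sums z"
    unfolding z_def using summable_dirichlet_powr[OF assms(1)] by (rule summable_sums)
  have inverse_powr: "inverse (of_nat (Suc n) powr s) = complex_of_real (real n + 1) powr (- s)" for n
    by (simp add: powr_minus add_ac)
  have A: "A n = 2 powr s * inverse (of_nat (Suc n) powr s)" for n
    unfolding A_def inverse_powr by (subst complex_of_real_half_powr) auto
  have "A sums (2 powr s * z)" unfolding A by (rule sums_mult[OF z])
  from sums_group[OF this, of 2]
  have "(\<lambda>m. A (2 * m) + A (2 * m + 1)) sums (2 powr s * z)"
    by (simp add: mult.commute numeral_2_eq_2)
  moreover have "A (2 * m + 1) = inverse (of_nat (Suc m) powr s)" for m
  proof -
    have "(real (2 * m + 1) + 1) / 2 = real m + 1" by simp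
    then show ?thesis unfolding A_def inverse_powr by (simp only:)
  qed
  then have "(\<lambda>m. A (2 * m + 1)) sums z" using z by simp
  ultimately have "(\<lambda>m. A (2 * m)) sums (2 powr s * z - z)"
    using sums_diff by fastforce
  then have "(\<lambda>m. A (2 * Suc m)) sums (2 powr s * z - z - A 0)"
    using sums_Suc_iff[of "\<lambda>m. A (2 * m)"] by simp
  moreover have "A 0 = 2 powr s"
    unfolding A_def using complex_of_real_half_powr[of 1 s] by simp
  moreover have "A (2 * Suc m) = complex_of_real (real m + 3/2) powr (- s)" for m
    by (simp add: A_def add_divide_distrib add.commute)
  ultimately show ?thesis by (simp add: algebra_simps)
qed

lemma frac_integral_eq_dirichlet:
  assumes "1 < Re s"
  defines "z \<equiv> (\<Sum>n. inverse (of_nat (Suc n) powr s) :: complex)"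
  shows "s * integral {1..} (frac_integrand s) = 1 / (s - 1) + 1/2 + 2 powr s - (2 powr s - 1) * z"
proof -
  have s: "s \<noteq> 0" "s \<noteq> 1" using assms(1) by auto
  define g where "g n = complex_of_real (frac_break n) powr (1 - s) / (1 - s)" for n
  have "filterlim frac_break at_top sequentially"
    using filterlim_real_sequentially
    by (rule filterlim_at_top_mono) (auto simp: frac_break_def)
  then have "(\<lambda>n. of_real (frac_break n) powr (1 - s)) \<longlonglongrightarrow> 0"
    using assms(1) by (intro tendsto_neg_powr_complex_of_real) auto
  then have "g \<longlonglongrightarrow> 0"
    unfolding g_def using tendsto_divide_zero by blast
  moreover have "0 - g 0 = 1 / (s - 1)"
    by (simp add: g_def frac_break_def minus_divide_right)
  ultimately have "(\<lambda>k. g (Suc k) - g k) sums (1 / (s - 1))"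
    using telescope_sums[of g 0] by simp
  from sums_add[OF sums_diff[OF this sums_shifted_powr_dirichlet[OF assms(1)]] sums_single[of 0 "\<lambda>_. 1/2"]]
  have "(\<lambda>k. s * frac_piece s k) sums (1 / (s - 1) - ((2 powr s - 1) * z - 2 powr s) + 1/2)"
    unfolding times_frac_piece[OF s] g_def z_def by (simp add: if_distrib cong: if_cong)
  moreover have "(\<lambda>k. s * frac_piece s k) sums (s * integral {1..} (frac_integrand s))"
    using s assms(1) by (intro sums_mult frac_piece_sums_integral) auto
  ultimately have "s * integral {1..} (frac_integrand s) = 1 / (s - 1) - ((2 powr s - 1) * z - 2 powr s) + 1/2"
    using sums_unique2 by blast
  then show ?thesis by (simp add: algebra_simps)
qed

lemma two_powr_neq_one:
  assumes "0 < Re s"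
  shows "(2::complex) powr s \<noteq> 1"
proof -
  have "norm ((2::complex) powr s) = 2 powr Re s" by (simp add: norm_powr_real_powr)
  moreover have "1 < (2::real) powr Re s" using assms by simp
  ultimately show ?thesis by auto
qed

lemma zeta_eqI:
  assumes holo: "f holomorphic_on zeta_domain"
    and dirichlet: "\<And>s. 1 < Re s \<Longrightarrow> f s = (\<Sum>n. inverse (of_nat (Suc n) powr s))"
    and "s \<in> zeta_domain"
  shows "zeta s = f s"
proof -
  define P where "P g \<longleftrightarrow> g holomorphic_on zeta_domain
      \<and> (\<forall>s. 1 < Re s \<longrightarrow> g s = (\<Sum>n. inverse (of_nat (Suc n) powr s)))
      \<and> (\<forall>s. s \<notin> zeta_domain \<longrightarrow> g s = 0)" for g
  define f' where "f' s = (if s \<in> zeta_domain then f s else 0)" for s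
  have "P f'"
    unfolding P_def f'_def using holomorphic_transform[OF holo] dirichlet
    by (auto simp: zeta_domain_def)
  moreover have "g = f'" if "P g" for g
  proof
    fix w
    show "g w = f' w"
    proof (cases "w \<in> zeta_domain")
      case True
      have "g w - f' w = 0"
      proof (rule analytic_continuation[of "\<lambda>v. g v - f' v" zeta_domain "{s. 1 < Re s}" 2])
        show "(\<lambda>v. g v - f' v) holomorphic_on zeta_domain"
          using \<open>P g\<close> \<open>P f'\<close> unfolding P_def by (intro holomorphic_on_diff) auto
        have "2 \<in> interior {s. 1 < Re s}" by (simp add: interior_open open_halfspace_Re_gt)
        then show "2 islimpt {s. 1 < Re s}" by (rule interior_limit_point)
        show "g z - f' z = 0" if "z \<in> {s. 1 < Re s}" for z
          using that \<open>P g\<close> \<open>P f'\<close> unfolding P_def by auto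
      qed (use True open_zeta_domain connected_zeta_domain in \<open>auto simp: zeta_domain_def\<close>)
      then show ?thesis by simp
    qed (use \<open>P g\<close> \<open>P f'\<close> in \<open>auto simp: P_def\<close>)
  qed
  ultimately have "zeta = f'"
    unfolding zeta_def P_def[symmetric] by (rule the_equality)
  then show ?thesis using \<open>s \<in> zeta_domain\<close> unfolding f'_def by meson
qed

lemma zeta_eq_frac_integral:
  assumes "s \<in> zeta_domain"
  shows "zeta s = (2 powr s + 1 / (s - 1) + 1/2 - s * integral {1..} (frac_integrand s)) / (2 powr s - 1)"
proof (rule zeta_eqI[OF _ _ assms])
  show "(\<lambda>s. (2 powr s + 1 / (s - 1) + 1/2 - s * integral {1..} (frac_integrand s)) / (2 powr s - 1))
      holomorphic_on zeta_domain"
  proof (rule holomorphic_transform)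
    show "(\<lambda>s. (2 powr s + 1 / (s - 1) + 1/2 - s * (\<Sum>k. frac_piece s k)) / (2 powr s - 1))
      holomorphic_on zeta_domain"
      by (intro holomorphic_intros frac_piece_suminf_holomorphic)
        (auto simp: zeta_domain_def dest: two_powr_neq_one)
  qed (simp add: zeta_domain_def sums_unique[OF frac_piece_sums_integral])
  show "(2 powr s + 1 / (s - 1) + 1/2 - s * integral {1..} (frac_integrand s)) / (2 powr s - 1)
      = (\<Sum>n. inverse (of_nat (Suc n) powr s))" if "1 < Re s" for s
    using frac_integral_eq_dirichlet[OF that] two_powr_neq_one[of s] that
    by (simp add: field_simps)
qed

theorem mainTheorem2:
  fixes \<rho> :: complex
  assumes "0 < Re \<rho>" and "Re \<rho> < 1" and "zeta \<rho> = 0"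
  shows "2 powr \<rho> + 1 / (\<rho> - 1) + 1 / 2
           = \<rho> * integral {1..} (\<lambda>t::real. of_real (frac (t + 1/2)) * (of_real t) powr (- \<rho> - 1))"
proof -
  have "\<rho> \<in> zeta_domain" using assms(1,2) by (auto simp: zeta_domain_def)
  moreover have "2 powr \<rho> - 1 \<noteq> 0" using two_powr_neq_one[OF assms(1)] by simp
  ultimately have "2 powr \<rho> + 1 / (\<rho> - 1) + 1/2 - \<rho> * integral {1..} (frac_integrand \<rho>) = 0"
    using zeta_eq_frac_integral assms(3) by simp
  then show ?thesis by (simp add: frac_integrand_def[abs_def])
qed

end
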